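(* Let $P=(P_1,\ldots,P_n)$ be a profile of linear orders on a finite set $A$ with voter set $N=\{1,\ldots,n\}$, and let $i\in N$ be a potential leaf of $P$. Let $P_{-i}$ denote the profile obtained from $P$ by removing voter $i$. Then $P$ is single-crossing with respect to some tree on $N$ if and only if $P_{-i}$ is single-crossing with respect to some tree on $N\setminus\{i\}$.
   Context: Voter $j$ prefers $a$ to $b$ is written $a\succ_j b$. Given a tree $T=(V,E)$ on a voter set $V$, a profile is single-crossing with respect to $T$ if for every pair of distinct alternatives $a,b$ one of the following holds: (i) there is an edge $e\in E$ such that, removing $e$ from $T$, the two resulting subtrees have vertex sets $V_1,V_2$ with all voters in $V_1$ preferring $a$ to $b$ and all voters in $V_2$ preferring $b$ to $a$; or (ii) all voters prefer $a$ to $b$, or all voters prefer $b$ to $a$. A voter $i\in N$ is a potential leaf of $P$ if (a) the set $S_i=\{(a,b)\in A^2: a\succ_i b \text{ and } b\succ_j a \text{ for all } j\ne i\}$ is nonempty, and (b) there exists $k\in N$, $k\ne i$, such that $a\succ_i b\Leftrightarrow a\succ_k b$ for all $a,b\in A$ such that neither $(a,b)$ nor $(b,a)$ belongs to $S_i$. *)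

theory Defs
  imports Main
begin

definition adj :: "'v set set \<Rightarrow> 'v \<Rightarrow> 'v \<Rightarrow> bool" where
  "adj E u v \<longleftrightarrow> {u, v} \<in> E"

definition reach :: "'v set set \<Rightarrow> 'v \<Rightarrow> 'v \<Rightarrow> bool" where
  "reach E = (adj E)\<^sup>*\<^sup>*"

definition is_graph :: "'v set \<Rightarrow> 'v set set \<Rightarrow> bool" where
  "is_graph V E \<longleftrightarrow> (\<forall>e\<in>E. \<exists>u\<in>V. \<exists>v\<in>V. u \<noteq> v \<and> e = {u, v})"

definition connected_graph :: "'v set \<Rightarrow> 'v set set \<Rightarrow> bool" where
  "connected_graph V E \<longleftrightarrow> (\<forall>u\<in>V. \<forall>v\<in>V. reach E u v)"

text \<open>A tree: a nonempty finite connected graph without cycles, i.e. one in which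
  every edge lies on no cycle (removing any edge disconnects its endpoints).\<close>

definition is_tree :: "'v set \<Rightarrow> 'v set set \<Rightarrow> bool" where
  "is_tree V E \<longleftrightarrow> finite V \<and> V \<noteq> {} \<and> is_graph V E \<and> connected_graph V E \<and>
     (\<forall>u v. {u, v} \<in> E \<longrightarrow> \<not> reach (E - {{u, v}}) u v)"

definition component :: "'v set \<Rightarrow> 'v set set \<Rightarrow> 'v set \<Rightarrow> 'v \<Rightarrow> 'v set" where
  "component V E e u = {w \<in> V. reach (E - {e}) u w}"

text \<open>A profile: P j is the strict preference of voter j, (a,b) \<in> P j meaning a \<succ>_j b.\<close>

definition profile :: "'v set \<Rightarrow> 'a set \<Rightarrow> ('v \<Rightarrow> ('a \<times> 'a) set) \<Rightarrow> bool" where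
  "profile N A P \<longleftrightarrow> (\<forall>j\<in>N. strict_linear_order_on A (P j) \<and> P j \<subseteq> A \<times> A)"

definition single_crossing_wrt :: "'v set \<Rightarrow> 'v set set \<Rightarrow> 'a set \<Rightarrow> ('v \<Rightarrow> ('a \<times> 'a) set) \<Rightarrow> bool" where
  "single_crossing_wrt V E A P \<longleftrightarrow>
     (\<forall>a\<in>A. \<forall>b\<in>A. a \<noteq> b \<longrightarrow>
        (\<exists>u v. {u, v} \<in> E \<and>
            (\<forall>w\<in>component V E {u, v} u. (a, b) \<in> P w) \<and>
            (\<forall>w\<in>component V E {u, v} v. (b, a) \<in> P w))
      \<or> (\<forall>j\<in>V. (a, b) \<in> P j) \<or> (\<forall>j\<in>V. (b, a) \<in> P j))"

definition S_set :: "'v set \<Rightarrow> 'a set \<Rightarrow> ('v \<Rightarrow> ('a \<times> 'a) set) \<Rightarrow> 'v \<Rightarrow> ('a \<times> 'a) set" where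
  "S_set N A P i = {(a, b) \<in> A \<times> A. (a, b) \<in> P i \<and> (\<forall>j\<in>N. j \<noteq> i \<longrightarrow> (b, a) \<in> P j)}"

definition potential_leaf :: "'v set \<Rightarrow> 'a set \<Rightarrow> ('v \<Rightarrow> ('a \<times> 'a) set) \<Rightarrow> 'v \<Rightarrow> bool" where
  "potential_leaf N A P i \<longleftrightarrow> i \<in> N \<and> S_set N A P i \<noteq> {} \<and>
     (\<exists>k\<in>N. k \<noteq> i \<and> (\<forall>a\<in>A. \<forall>b\<in>A.
        (a, b) \<notin> S_set N A P i \<and> (b, a) \<notin> S_set N A P i \<longrightarrow>
          ((a, b) \<in> P i \<longleftrightarrow> (a, b) \<in> P k)))"

end

theory Submission
  imports Defs
begin

text \<open>A voter i who is alone in preferring a to b must be cut off from all other voters by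
  the edge on which the pair (a, b) crosses; hence in every single-crossing tree i is a leaf,
  and deleting a leaf preserves single-crossingness. Conversely, attach i as a leaf to a voter k
  who agrees with i on all pairs outside S_i and its reverse: pairs in S_i cross on the new edge,
  and every other pair crosses where it did before, because i lies on the same side as k.\<close>

lemma reach_refl [simp]: "reach E u u"
  by (simp add: reach_def)

lemma reach_edge: "{u, w} \<in> E \<Longrightarrow> reach E u w"
  unfolding reach_def by (rule r_into_rtranclp) (simp add: adj_def)

lemma reach_trans: "reach E u v \<Longrightarrow> reach E v w \<Longrightarrow> reach E u w"
  unfolding reach_def by (rule rtranclp_trans)

lemma reach_mono: "F \<subseteq> G \<Longrightarrow> reach F u w \<Longrightarrow> reach G u w"
  unfolding reach_def
  by (erule rtranclp_mono[THEN predicate2D, rotated]) (auto simp: adj_def)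

lemma reach_sym: "reach E u w \<Longrightarrow> reach E w u"
  unfolding reach_def
proof (induction rule: rtranclp_induct)
  case (step y z)
  have "adj E z y"
    using step(2) by (simp add: adj_def insert_commute)
  then show ?case
    using step(3) by (rule converse_rtranclp_into_rtranclp)
qed simp

lemma reach_isolated:
  assumes "\<forall>e\<in>F. i \<notin> e" and "reach F i w"
  shows "w = i"
  using assms(2) unfolding reach_def
  by (induction rule: rtranclp_induct) (use assms(1) in \<open>auto simp: adj_def\<close>)

lemma reach_contract_pendant:
  assumes "\<forall>e\<in>F. i \<notin> e" and "reach (insert {i, k} F) u w"
  shows "reach F (if u = i then k else u) (if w = i then k else w)"
  using assms(2) unfolding reach_def
proof (induction rule: rtranclp_induct)
  case (step y z)
  show ?case
  proof (cases "{y, z} = {i, k}")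
    case True
    then have "(if y = i then k else y) = (if z = i then k else z)"
      by (auto simp: doubleton_eq_iff)
    then show ?thesis
      using step(3) by simp
  next
    case False
    then have "{y, z} \<in> F"
      using step(2) by (simp add: adj_def)
    then have "y \<noteq> i" "z \<noteq> i" "adj F y z"
      using assms(1) by (auto simp: adj_def)
    then show ?thesis
      using step(3) by (simp add: rtranclp.rtrancl_into_rtrancl)
  qed
qed simp

lemma is_graph_edgeD: "is_graph V E \<Longrightarrow> {u, v} \<in> E \<Longrightarrow> u \<in> V \<and> v \<in> V \<and> u \<noteq> v"
  unfolding is_graph_def by (drule bspec) (auto simp: doubleton_eq_iff)

lemma is_graph_avoids: "is_graph V E \<Longrightarrow> i \<notin> V \<Longrightarrow> \<forall>e\<in>E. i \<notin> e"
  unfolding is_graph_def by fastforce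

lemma component_mono: "V' \<subseteq> V \<Longrightarrow> E' \<subseteq> E \<Longrightarrow> component V' E' e z \<subseteq> component V E e z"
  unfolding component_def using reach_mono[of "E' - {e}" "E - {e}"] by blast

subsection \<open>Deleting a leaf\<close>

lemma connected_graph_Diff_leaf:
  assumes "connected_graph V E" and "{i, v} \<in> E" and "\<forall>e\<in>E - {{i, v}}. i \<notin> e"
  shows "connected_graph (V - {i}) (E - {{i, v}})"
  unfolding connected_graph_def
proof (intro ballI)
  fix x y assume "x \<in> V - {i}" "y \<in> V - {i}"
  moreover have "E = insert {i, v} (E - {{i, v}})"
    using assms(2) by blast
  ultimately have "reach (insert {i, v} (E - {{i, v}})) x y"
    using assms(1) by (metis DiffD1 connected_graph_def)
  from reach_contract_pendant[OF assms(3) this] \<open>x \<in> V - {i}\<close> \<open>y \<in> V - {i}\<close>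
  show "reach (E - {{i, v}}) x y" by simp
qed

lemma is_tree_Diff_leaf:
  assumes tree: "is_tree V E" and iv: "{i, v} \<in> E" and leaf: "\<forall>e\<in>E - {{i, v}}. i \<notin> e"
  shows "is_tree (V - {i}) (E - {{i, v}})"
  unfolding is_tree_def
proof (intro conjI)
  have graph: "is_graph V E"
    using tree by (simp add: is_tree_def)
  then show "V - {i} \<noteq> {}"
    using is_graph_edgeD[OF graph iv] by auto
  show "is_graph (V - {i}) (E - {{i, v}})"
    unfolding is_graph_def
  proof
    fix e assume e: "e \<in> E - {{i, v}}"
    then obtain x y where "x \<in> V" "y \<in> V" "x \<noteq> y" "e = {x, y}"
      using graph unfolding is_graph_def by blast
    moreover have "i \<notin> e"
      using e leaf by blast
    ultimately show "\<exists>x\<in>V - {i}. \<exists>y\<in>V - {i}. x \<noteq> y \<and> e = {x, y}"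
      by blast
  qed
  show "connected_graph (V - {i}) (E - {{i, v}})"
    using tree iv leaf by (simp add: is_tree_def connected_graph_Diff_leaf)
  show "\<forall>x y. {x, y} \<in> E - {{i, v}} \<longrightarrow> \<not> reach (E - {{i, v}} - {{x, y}}) x y"
  proof (intro allI impI notI)
    fix x y assume xy: "{x, y} \<in> E - {{i, v}}" and r: "reach (E - {{i, v}} - {{x, y}}) x y"
    have "reach (E - {{x, y}}) x y"
      by (rule reach_mono[OF _ r]) blast
    with xy show False
      using tree by (simp add: is_tree_def)
  qed
qed (use tree in \<open>simp add: is_tree_def\<close>)

lemma component_leaf_edge_far_side:
  assumes "is_graph V E" and "connected_graph V E"
    and iv: "{i, v} \<in> E" and leaf: "\<forall>e\<in>E - {{i, v}}. i \<notin> e"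
  shows "V - {i} \<subseteq> component V E {i, v} v"
proof
  fix w assume w: "w \<in> V - {i}"
  have "v \<in> V - {i}"
    using is_graph_edgeD[OF assms(1) iv] by auto
  with w have "reach (E - {{i, v}}) v w"
    using connected_graph_Diff_leaf[OF assms(2) iv leaf] by (simp add: connected_graph_def)
  with w show "w \<in> component V E {i, v} v"
    by (simp add: component_def)
qed

subsection \<open>Attaching a leaf\<close>

lemma is_tree_insert_leaf:
  assumes tree: "is_tree (V - {i}) E" and i: "i \<in> V" and k: "k \<in> V - {i}"
  shows "is_tree V (insert {i, k} E)"
  unfolding is_tree_def
proof (intro conjI)
  have graph: "is_graph (V - {i}) E" and conn: "connected_graph (V - {i}) E"
    using tree by (simp_all add: is_tree_def)
  have avoid: "\<forall>e\<in>E. i \<notin> e"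
    using is_graph_avoids[OF graph] by simp
  show "finite V"
    using tree by (simp add: is_tree_def)
  show "V \<noteq> {}"
    using i by blast
  show "is_graph V (insert {i, k} E)"
    unfolding is_graph_def
  proof
    fix e assume "e \<in> insert {i, k} E"
    then consider "e = {i, k}" | "e \<in> E"
      by blast
    then show "\<exists>x\<in>V. \<exists>y\<in>V. x \<noteq> y \<and> e = {x, y}"
    proof cases
      case 1
      with i k show ?thesis
        by auto
    next
      case 2
      then obtain x y where "x \<in> V - {i}" "y \<in> V - {i}" "x \<noteq> y" "e = {x, y}"
        using graph unfolding is_graph_def by blast
      then show ?thesis
        by auto
    qed
  qed
  have reach_k: "reach (insert {i, k} E) x k" if "x \<in> V" for x
  proof (cases "x = i")
    case False
    then have "reach E x k"
      using conn that k by (simp add: connected_graph_def)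
    then show ?thesis
      by (rule reach_mono[rotated]) blast
  qed (simp add: reach_edge)
  show "connected_graph V (insert {i, k} E)"
    unfolding connected_graph_def
  proof (intro ballI)
    fix x y assume "x \<in> V" "y \<in> V"
    then show "reach (insert {i, k} E) x y"
      using reach_k reach_sym reach_trans by metis
  qed
  show "\<forall>x y. {x, y} \<in> insert {i, k} E \<longrightarrow> \<not> reach (insert {i, k} E - {{x, y}}) x y"
  proof (intro allI impI notI)
    fix x y assume xy: "{x, y} \<in> insert {i, k} E" and r: "reach (insert {i, k} E - {{x, y}}) x y"
    show False
    proof (cases "{x, y} = {i, k}")
      case True
      have "reach E x y"
        by (rule reach_mono[OF _ r]) (use True in blast)
      then have "reach E i k"
        using True by (auto simp: doubleton_eq_iff intro: reach_sym)
      then show False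
        using reach_isolated[OF avoid] k by blast
    next
      case False
      then have xyE: "{x, y} \<in> E"
        using xy by simp
      then have "x \<noteq> i" "y \<noteq> i"
        using avoid by auto
      have "insert {i, k} E - {{x, y}} = insert {i, k} (E - {{x, y}})"
        using False by blast
      with r have "reach (insert {i, k} (E - {{x, y}})) x y"
        by simp
      from reach_contract_pendant[OF _ this] avoid \<open>x \<noteq> i\<close> \<open>y \<noteq> i\<close>
      have "reach (E - {{x, y}}) x y"
        by simp
      then show False
        using tree xyE by (simp add: is_tree_def)
    qed
  qed
qed

lemma component_pendant_edge:
  assumes avoid: "\<forall>e\<in>E. i \<notin> e" and "k \<noteq> i"
  shows "component V (insert {i, k} E) {i, k} i \<subseteq> {i}"
    and "component V (insert {i, k} E) {i, k} k \<subseteq> V - {i}"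
proof -
  have isolated: "w = i" if "reach (insert {i, k} E - {{i, k}}) i w" for w
    using reach_isolated[OF avoid reach_mono[OF _ that]] by blast
  then show "component V (insert {i, k} E) {i, k} i \<subseteq> {i}"
    by (auto simp: component_def)
  show "component V (insert {i, k} E) {i, k} k \<subseteq> V - {i}"
  proof
    fix w assume "w \<in> component V (insert {i, k} E) {i, k} k"
    then have "w \<in> V" and "reach (insert {i, k} E - {{i, k}}) w k"
      by (simp_all add: component_def reach_sym)
    moreover have "w \<noteq> i"
      using isolated calculation(2) \<open>k \<noteq> i\<close> by blast
    ultimately show "w \<in> V - {i}"
      by simp
  qed
qed

lemma component_insert_pendant:
  assumes avoid: "\<forall>e\<in>E. i \<notin> e" and xy: "{x, y} \<in> E" and k: "k \<in> V - {i}" and "z \<noteq> i"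
    and w: "w \<in> component V (insert {i, k} E) {x, y} z"
  shows "(if w = i then k else w) \<in> component (V - {i}) E {x, y} z"
proof -
  have "{x, y} \<noteq> {i, k}"
    using avoid xy by blast
  then have "insert {i, k} E - {{x, y}} = insert {i, k} (E - {{x, y}})"
    by blast
  with w have "reach (insert {i, k} (E - {{x, y}})) z w" and "w \<in> V"
    by (simp_all add: component_def)
  from reach_contract_pendant[OF _ this(1)] avoid \<open>z \<noteq> i\<close>
  have "reach (E - {{x, y}}) z (if w = i then k else w)"
    by simp
  with \<open>w \<in> V\<close> k show ?thesis
    by (simp add: component_def)
qed

subsection \<open>Single-crossing profiles\<close>

definition crosses_at :: "'v set \<Rightarrow> 'v set set \<Rightarrow> ('v \<Rightarrow> ('a \<times> 'a) set) \<Rightarrow> 'a \<Rightarrow> 'a \<Rightarrow> 'v \<Rightarrow> 'v \<Rightarrow> bool" where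
  "crosses_at V E P a b u v \<longleftrightarrow> {u, v} \<in> E \<and>
     (\<forall>w\<in>component V E {u, v} u. (a, b) \<in> P w) \<and> (\<forall>w\<in>component V E {u, v} v. (b, a) \<in> P w)"

lemma single_crossing_wrt_iff:
  "single_crossing_wrt V E A P \<longleftrightarrow>
     (\<forall>a\<in>A. \<forall>b\<in>A. a \<noteq> b \<longrightarrow>
        (\<exists>u v. crosses_at V E P a b u v) \<or> (\<forall>j\<in>V. (a, b) \<in> P j) \<or> (\<forall>j\<in>V. (b, a) \<in> P j))"
  by (simp add: single_crossing_wrt_def crosses_at_def)

lemma profile_asym: "profile N A P \<Longrightarrow> j \<in> N \<Longrightarrow> (a, b) \<in> P j \<Longrightarrow> (b, a) \<notin> P j"
  unfolding profile_def strict_linear_order_on_def irrefl_def by (metis transD)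

lemma single_crossing_Diff_leaf:
  assumes graph: "is_graph V E" and conn: "connected_graph V E"
    and iv: "{i, v} \<in> E" and leaf: "\<forall>e\<in>E - {{i, v}}. i \<notin> e"
    and sc: "single_crossing_wrt V E A P"
  shows "single_crossing_wrt (V - {i}) (E - {{i, v}}) A P"
  unfolding single_crossing_wrt_iff
proof (intro ballI impI)
  fix a b assume "a \<in> A" "b \<in> A" "a \<noteq> b"
  with sc consider x y where "crosses_at V E P a b x y"
    | "\<forall>j\<in>V. (a, b) \<in> P j" | "\<forall>j\<in>V. (b, a) \<in> P j"
    unfolding single_crossing_wrt_iff by blast
  then show "(\<exists>x y. crosses_at (V - {i}) (E - {{i, v}}) P a b x y)
      \<or> (\<forall>j\<in>V - {i}. (a, b) \<in> P j) \<or> (\<forall>j\<in>V - {i}. (b, a) \<in> P j)"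
  proof cases
    case (1 x y)
    note cross = this
    show ?thesis
    proof (cases "{x, y} = {i, v}")
      case True
      have far: "V - {i} \<subseteq> component V E {i, v} v"
        by (rule component_leaf_edge_far_side[OF graph conn iv leaf])
      from True have "x = i \<and> y = v \<or> x = v \<and> y = i"
        by (auto simp: doubleton_eq_iff)
      then show ?thesis
        using cross far by (auto simp: crosses_at_def insert_commute)
    next
      case False
      have "component (V - {i}) (E - {{i, v}}) {x, y} z \<subseteq> component V E {x, y} z" for z
        by (rule component_mono) auto
      with cross False have "crosses_at (V - {i}) (E - {{i, v}}) P a b x y"
        unfolding crosses_at_def by blast
      then show ?thesis
        by blast
    qed
  qed auto
qed

text \<open>The edge on which a pair of S_i crosses separates i from all other voters.\<close>

lemma single_crossing_S_set_leaf:
  assumes prof: "profile V A P" and graph: "is_graph V E" and sc: "single_crossing_wrt V E A P"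
    and i: "i \<in> V" and k: "k \<in> V" "k \<noteq> i" and ab: "(a, b) \<in> S_set V A P i"
  shows "\<exists>v. {i, v} \<in> E \<and> (\<forall>e\<in>E - {{i, v}}. i \<notin> e)"
proof -
  from ab have A: "a \<in> A" "b \<in> A" and abi: "(a, b) \<in> P i"
    and others: "\<forall>j\<in>V. j \<noteq> i \<longrightarrow> (b, a) \<in> P j"
    by (auto simp: S_set_def)
  have only_i: "j = i" if "j \<in> V" "(a, b) \<in> P j" for j
    using others profile_asym[OF prof] that by blast
  have "a \<noteq> b"
    using profile_asym[OF prof i abi] abi by blast
  with sc A have "(\<exists>u v. crosses_at V E P a b u v) \<or> (\<forall>j\<in>V. (a, b) \<in> P j) \<or> (\<forall>j\<in>V. (b, a) \<in> P j)"
    unfolding single_crossing_wrt_iff by blast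
  moreover have "\<not> (\<forall>j\<in>V. (a, b) \<in> P j)"
    using only_i k by blast
  moreover have "\<not> (\<forall>j\<in>V. (b, a) \<in> P j)"
    using profile_asym[OF prof i abi] i by blast
  ultimately obtain u v where "crosses_at V E P a b u v"
    by blast
  then have uv: "{u, v} \<in> E" and u_side: "\<forall>w\<in>component V E {u, v} u. (a, b) \<in> P w"
    by (simp_all add: crosses_at_def)
  have "u \<in> V"
    using is_graph_edgeD[OF graph uv] by simp
  then have "u = i"
    using u_side only_i by (simp add: component_def)
  have "i \<notin> e" if e: "e \<in> E - {{i, v}}" for e
  proof
    assume "i \<in> e"
    from e graph obtain p q where pq: "p \<in> V" "q \<in> V" "p \<noteq> q" "e = {p, q}"
      unfolding is_graph_def by blast
    define x where "x = (if p = i then q else p)"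
    have x: "e = {i, x}" "x \<in> V" "x \<noteq> i"
      using pq \<open>i \<in> e\<close> by (auto simp: x_def)
    with e have "reach (E - {{i, v}}) i x"
      by (simp add: reach_edge)
    with x \<open>u = i\<close> have "(a, b) \<in> P x"
      using u_side by (simp add: component_def)
    with x show False
      using only_i by blast
  qed
  with uv \<open>u = i\<close> show ?thesis
    by blast
qed

lemma single_crossing_insert_leaf:
  assumes graph: "is_graph (V - {i}) E" and k: "k \<in> V - {i}"
    and sc: "single_crossing_wrt (V - {i}) E A P"
    and agree: "\<forall>a\<in>A. \<forall>b\<in>A. (a, b) \<notin> S_set V A P i \<and> (b, a) \<notin> S_set V A P i \<longrightarrow>
                  ((a, b) \<in> P i \<longleftrightarrow> (a, b) \<in> P k)"
  shows "single_crossing_wrt V (insert {i, k} E) A P"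
  unfolding single_crossing_wrt_iff
proof (intro ballI impI)
  fix a b assume ab: "a \<in> A" "b \<in> A" "a \<noteq> b"
  let ?E = "insert {i, k} E"
  have avoid: "\<forall>e\<in>E. i \<notin> e"
    using is_graph_avoids[OF graph] by simp
  have i_side: "component V ?E {i, k} i \<subseteq> {i}"
    and k_side: "component V ?E {i, k} k \<subseteq> V - {i}"
    using component_pendant_edge[OF avoid] k by auto
  consider "(a, b) \<in> S_set V A P i" | "(b, a) \<in> S_set V A P i"
    | "(a, b) \<notin> S_set V A P i" "(b, a) \<notin> S_set V A P i"
    by blast
  then show "(\<exists>x y. crosses_at V ?E P a b x y) \<or> (\<forall>j\<in>V. (a, b) \<in> P j) \<or> (\<forall>j\<in>V. (b, a) \<in> P j)"
  proof cases
    case 1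
    then have "crosses_at V ?E P a b i k"
      using i_side k_side by (auto simp: crosses_at_def S_set_def)
    then show ?thesis
      by blast
  next
    case 2
    then have "crosses_at V ?E P a b k i"
      using i_side k_side by (auto simp: crosses_at_def S_set_def insert_commute)
    then show ?thesis
      by blast
  next
    case 3
    then have agree_ab: "(a, b) \<in> P i \<longleftrightarrow> (a, b) \<in> P k"
      and agree_ba: "(b, a) \<in> P i \<longleftrightarrow> (b, a) \<in> P k"
      using agree ab by blast+
    from sc ab consider x y where "crosses_at (V - {i}) E P a b x y"
      | "\<forall>j\<in>V - {i}. (a, b) \<in> P j" | "\<forall>j\<in>V - {i}. (b, a) \<in> P j"
      unfolding single_crossing_wrt_iff by blast
    then show ?thesis
    proof cases
      case (1 x y)
      then have xy: "{x, y} \<in> E"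
        and x_side: "\<forall>w\<in>component (V - {i}) E {x, y} x. (a, b) \<in> P w"
        and y_side: "\<forall>w\<in>component (V - {i}) E {x, y} y. (b, a) \<in> P w"
        by (simp_all add: crosses_at_def)
      have "x \<noteq> i" "y \<noteq> i"
        using avoid xy by auto
      have "crosses_at V ?E P a b x y"
        unfolding crosses_at_def
      proof (intro conjI ballI)
        show "{x, y} \<in> ?E"
          using xy by simp
      next
        fix w assume "w \<in> component V ?E {x, y} x"
        from component_insert_pendant[OF avoid xy k \<open>x \<noteq> i\<close> this]
        show "(a, b) \<in> P w"
          using x_side agree_ab by (cases "w = i") auto
      next
        fix w assume "w \<in> component V ?E {x, y} y"
        from component_insert_pendant[OF avoid xy k \<open>y \<noteq> i\<close> this]
        show "(b, a) \<in> P w"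
          using y_side agree_ba by (cases "w = i") auto
      qed
      then show ?thesis
        by blast
    next
      case 2
      then show ?thesis
        using agree_ab k by blast
    next
      case 3
      then show ?thesis
        using agree_ba k by blast
    qed
  qed
qed

theorem single_crossing_tree_iff_Diff_potential_leaf:
  assumes prof: "profile V A P" and leaf: "potential_leaf V A P i"
  shows "(\<exists>E. is_tree V E \<and> single_crossing_wrt V E A P)
     \<longleftrightarrow> (\<exists>E. is_tree (V - {i}) E \<and> single_crossing_wrt (V - {i}) E A P)"
proof -
  have i: "i \<in> V"
    using leaf by (simp add: potential_leaf_def)
  obtain a b where ab: "(a, b) \<in> S_set V A P i"
    using leaf by (auto simp: potential_leaf_def)
  obtain k where k: "k \<in> V - {i}"
    and agree: "\<forall>a\<in>A. \<forall>b\<in>A. (a, b) \<notin> S_set V A P i \<and> (b, a) \<notin> S_set V A P i \<longrightarrow>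
                  ((a, b) \<in> P i \<longleftrightarrow> (a, b) \<in> P k)"
    using leaf unfolding potential_leaf_def by (elim conjE bexE) simp
  show ?thesis
  proof
    assume "\<exists>E. is_tree V E \<and> single_crossing_wrt V E A P"
    then obtain E where tree: "is_tree V E" and sc: "single_crossing_wrt V E A P"
      by blast
    then have graph: "is_graph V E" and conn: "connected_graph V E"
      by (simp_all add: is_tree_def)
    obtain v where iv: "{i, v} \<in> E" and only: "\<forall>e\<in>E - {{i, v}}. i \<notin> e"
      using single_crossing_S_set_leaf[OF prof graph sc i _ _ ab] k by blast
    show "\<exists>E. is_tree (V - {i}) E \<and> single_crossing_wrt (V - {i}) E A P"
      using is_tree_Diff_leaf[OF tree iv only] single_crossing_Diff_leaf[OF graph conn iv only sc]
      by blast
  next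
    assume "\<exists>E. is_tree (V - {i}) E \<and> single_crossing_wrt (V - {i}) E A P"
    then obtain E where tree: "is_tree (V - {i}) E" and sc: "single_crossing_wrt (V - {i}) E A P"
      by blast
    then have "is_graph (V - {i}) E"
      by (simp add: is_tree_def)
    then show "\<exists>E. is_tree V E \<and> single_crossing_wrt V E A P"
      using is_tree_insert_leaf[OF tree i k] single_crossing_insert_leaf[OF _ k sc agree] by blast
  qed
qed

theorem lemma2:
  fixes n :: nat and A :: "'a set" and P :: "nat \<Rightarrow> ('a \<times> 'a) set" and i :: nat
  assumes "finite A"
    and "profile {1..n} A P"
    and "potential_leaf {1..n} A P i"
  shows "(\<exists>E. is_tree {1..n} E \<and> single_crossing_wrt {1..n} E A P)
     \<longleftrightarrow> (\<exists>E. is_tree ({1..n} - {i}) E \<and> single_crossing_wrt ({1..n} - {i}) E A P)"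
  using assms(2,3) by (rule single_crossing_tree_iff_Diff_potential_leaf)

end
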